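(* Let $w\in\{a,b\}^*$ (with $a\neq b$) satisfy $l(w)\ge 9$. Then there exists an element of $\mathtt{BR}(w)$ that is not rich.
   Context: For a word $w=w_1\cdots w_n$, $w^R=w_n\cdots w_1$; $w$ is a palindrome if $w=w^R$; a factor of $w$ is a word $u$ with $w=puq$. A word $w$ is rich if the number of distinct nonempty palindromic factors of $w$ equals $|w|$. The block reversal of a nonempty word $w$ is $\mathtt{BR}(w)=\{B_t\cdots B_1 : w=B_1\cdots B_t,\ t\ge1,\ \text{each } B_i \text{ nonempty}\}$. Every nonempty word has a unique run-length encoding $w=c_1^{n_1}\cdots c_k^{n_k}$ with letters $c_i\neq c_{i+1}$ and $n_i\ge1$; $l(w)=k$ is the length of its run sequence. *)

theory Defs
  imports Main "HOL-Library.Sublist"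
begin

text \<open>Words are lists. A factor of w is a contiguous sublist (Sublist.sublist).\<close>

definition pal_factors :: "'a list \<Rightarrow> 'a list set" where
  "pal_factors w = {u. u \<noteq> [] \<and> sublist u w \<and> rev u = u}"

definition rich :: "'a list \<Rightarrow> bool" where
  "rich w \<longleftrightarrow> card (pal_factors w) = length w"

definition block_reversal :: "'a list \<Rightarrow> 'a list set" where
  "block_reversal w = {concat (rev Bs) | Bs. Bs \<noteq> [] \<and> concat Bs = w \<and> (\<forall>B \<in> set Bs. B \<noteq> [])}"

definition run_length :: "'a list \<Rightarrow> nat" where
  "run_length w = length (remdups_adj w)"

end

theory Submission
  imports Defs
begin

text \<open>Appending a letter to a word creates at most one new palindromic factor, its longest
  palindromic suffix; so a word has at most as many nonempty palindromic factors as letters, and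
  factors of rich words are rich. Write the binary word as \<open>x^n0 y^n1 ... x^n8 Z\<close> with all
  \<open>ni > 0\<close> and cut it into the blocks
  \<open>x^n0 y^n1 | x^n2 | y^n3 x^(n4-1) | x y^n5 | x^n6 y | y^(n7-1) x^n8 | Z\<close>.
  Reversing the block order merges runs and produces the factor \<open>x^A y x y^D x^E\<close> with
  \<open>A, D, E \<ge> 2\<close>. In a word \<open>x^A y^B x^C y^D x^E\<close> with \<open>B \<noteq> D\<close>, \<open>C < A\<close>, \<open>C < E\<close> and (up to
  reversal) \<open>E \<le> A\<close>, comparing run lengths shows that every palindromic suffix is a power of \<open>x\<close>
  of length at most \<open>E\<close>, which already occurs in \<open>x^A\<close>. So the last letter creates no new
  palindrome, and neither the factor nor the block reversal containing it is rich.\<close>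

lemma pal_factors_Nil [simp]: "pal_factors [] = {}"
  by (auto simp: pal_factors_def)

lemma finite_pal_factors: "finite (pal_factors w)"
proof (rule finite_subset)
  show "pal_factors w \<subseteq> {u. set u \<subseteq> set w \<and> length u \<le> length w}"
    by (auto simp: pal_factors_def dest: set_mono_sublist sublist_length_le)
  show "finite {u. set u \<subseteq> set w \<and> length u \<le> length w}"
    by (rule finite_lists_length_le) simp
qed

lemma pal_factors_rev: "pal_factors (rev w) = pal_factors w"
  unfolding pal_factors_def by (metis sublist_rev_right)

lemma rich_rev: "rich (rev w) \<longleftrightarrow> rich w"
  by (simp add: rich_def pal_factors_rev)

text \<open>New palindromes are suffixes; the shorter of two is then also a prefix of the longer one, so it
  already occurs in \<open>u\<close>.\<close>
lemma pal_factors_snoc_new_unique: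
  assumes "p \<in> pal_factors (u @ [c]) - pal_factors u" and "q \<in> pal_factors (u @ [c]) - pal_factors u"
  shows "p = q"
proof -
  have shorter_eq: "p = q" if "length p \<le> length q"
    and p: "p \<in> pal_factors (u @ [c]) - pal_factors u" and q: "q \<in> pal_factors (u @ [c]) - pal_factors u"
    for p q
  proof (rule ccontr)
    assume "p \<noteq> q"
    have "suffix p (u @ [c])" "suffix q (u @ [c])"
      using p q by (auto simp: pal_factors_def sublist_snoc)
    with \<open>length p \<le> length q\<close> have "suffix p q"
      by (metis suffix_length_suffix)
    with \<open>p \<noteq> q\<close> have "length p < length q"
      by (auto simp: suffix_def)
    from \<open>suffix q (u @ [c])\<close> q obtain q' where q': "q = q' @ [c]" "suffix q' u"
      by (auto simp: pal_factors_def)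
    have "prefix p q"
      using \<open>suffix p q\<close> p q by (simp add: pal_factors_def suffix_to_prefix)
    with q' \<open>length p < length q\<close> have "prefix p q'"
      by (auto simp: prefix_snoc)
    with q' have "sublist p u"
      by (meson prefix_imp_sublist suffix_imp_sublist sublist_order.order_trans)
    with p show False
      by (auto simp: pal_factors_def)
  qed
  show ?thesis
    using shorter_eq[OF _ assms] shorter_eq[OF _ assms(2,1)] nat_le_linear by metis
qed

lemma card_pal_factors_snoc_le: "card (pal_factors (u @ [c])) \<le> Suc (card (pal_factors u))"
proof -
  let ?new = "pal_factors (u @ [c]) - pal_factors u"
  have "pal_factors u \<subseteq> pal_factors (u @ [c])"
    by (auto simp: pal_factors_def intro: sublist_order.order_trans)
  then have "pal_factors (u @ [c]) = pal_factors u \<union> ?new"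
    by blast
  moreover have "card ?new \<le> Suc 0"
    using finite_Diff[OF finite_pal_factors]
    by (rule card_le_Suc0_iff_eq[THEN iffD2]) (blast intro: pal_factors_snoc_new_unique)
  ultimately show ?thesis
    using card_Un_le[of "pal_factors u" ?new] by simp
qed

lemma card_pal_factors_append_le:
  "card (pal_factors (u @ v)) \<le> card (pal_factors u) + length v"
proof (induction v rule: rev_induct)
  case (snoc c v)
  then show ?case
    using card_pal_factors_snoc_le[of "u @ v" c] by simp
qed simp

lemma card_pal_factors_prepend_le:
  "card (pal_factors (v @ u)) \<le> card (pal_factors u) + length v"
proof -
  have "card (pal_factors (rev (v @ u))) \<le> card (pal_factors (rev u)) + length (rev v)"
    using card_pal_factors_append_le[of "rev u" "rev v"] by simp
  then show ?thesis
    unfolding pal_factors_rev by simp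
qed

lemma card_pal_factors_le_length: "card (pal_factors w) \<le> length w"
  using card_pal_factors_append_le[of "[]" w] by simp

lemma card_pal_factors_sublist_le:
  "card (pal_factors (l @ u @ r)) \<le> card (pal_factors u) + length l + length r"
  using card_pal_factors_prepend_le[of l "u @ r"] card_pal_factors_append_le[of u r] by simp

lemma rich_sublist:
  assumes "rich w" and "sublist u w"
  shows "rich u"
proof -
  from \<open>sublist u w\<close> obtain l r where "w = l @ u @ r"
    by (auto simp: sublist_def)
  then show ?thesis
    using assms(1) card_pal_factors_sublist_le[of l u r] card_pal_factors_le_length[of u]
    by (simp add: rich_def)
qed

lemma not_rich_snocI:
  assumes "\<And>s. s \<noteq> [] \<Longrightarrow> suffix s (u @ [c]) \<Longrightarrow> rev s = s \<Longrightarrow> sublist s u"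
  shows "\<not> rich (u @ [c])"
proof -
  have "pal_factors (u @ [c]) \<subseteq> pal_factors u"
    using assms by (auto simp: pal_factors_def sublist_snoc)
  then have "card (pal_factors (u @ [c])) \<le> card (pal_factors u)"
    by (simp add: card_mono finite_pal_factors)
  then show ?thesis
    using card_pal_factors_le_length[of u] by (simp add: rich_def)
qed

lemma suffix_replicate: "suffix s (replicate n c) \<longleftrightarrow> (\<exists>m\<le>n. s = replicate m c)"
proof
  assume "suffix s (replicate n c)"
  then obtain z where z: "replicate n c = z @ s"
    by (auto simp: suffix_def)
  then have "\<forall>a\<in>set s. a = c"
    by (metis UnCI in_set_replicate set_append)
  then have "s = replicate (length s) c"
    by (simp add: replicate_length_same)
  moreover have "length s \<le> n"
    using z by (metis le_add2 length_append length_replicate)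
  ultimately show "\<exists>m\<le>n. s = replicate m c"
    by blast
qed (metis suffix_def le_add_diff_inverse2 replicate_add)

lemma suffix_replicate_append:
  "suffix s (replicate n c @ t) \<longleftrightarrow> suffix s t \<or> (\<exists>m. 0 < m \<and> m \<le> n \<and> s = replicate m c @ t)"
  by (auto simp: suffix_append suffix_replicate)

lemma leading_runs_eq:
  assumes "x \<noteq> y" "0 < k" "0 < l"
    and "replicate m x @ replicate k y @ s = replicate n x @ replicate l y @ t"
  shows "m = n"
proof -
  have "takeWhile (\<lambda>c. c = x) (replicate i x @ replicate j y @ r) = replicate i x"
    if "0 < j" for i j r
    using that assms(1) by (induction i) (auto simp: gr0_conv_Suc)
  then show ?thesis
    using assms by (metis length_replicate)
qed

lemma palindromic_suffix_of_five_runs: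
  assumes "x \<noteq> y" "0 < B" "0 < C" "0 < D" "B \<noteq> D" "C < E"
    and "suffix s (replicate A x @ replicate B y @ replicate C x @ replicate D y @ replicate E x)"
    and "rev s = s"
  shows "suffix s (replicate E x)"
proof -
  have hd_last: "hd s = last s"
    using \<open>rev s = s\<close> by (metis hd_rev)
  from assms(7) consider
      "suffix s (replicate E x)"
    | d where "0 < d" "s = replicate d y @ replicate E x"
    | c where "c \<le> C" "s = replicate c x @ replicate D y @ replicate E x"
    | b where "0 < b" "s = replicate b y @ replicate C x @ replicate D y @ replicate E x"
    | a where "s = replicate a x @ replicate B y @ replicate C x @ replicate D y @ replicate E x"
    unfolding suffix_replicate_append by (elim disjE exE conjE) auto
  then show ?thesis
  proof cases
    case (2 d)
    then have "hd s = y" "last s = x"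
      using \<open>C < E\<close> by (simp_all add: hd_append last_append)
    with hd_last \<open>x \<noteq> y\<close> show ?thesis
      by simp
  next
    case (3 c)
    then have "replicate E x @ replicate D y @ replicate c x = replicate c x @ replicate D y @ replicate E x"
      using \<open>rev s = s\<close> by simp
    then have "E = c"
      by (rule leading_runs_eq[OF \<open>x \<noteq> y\<close> \<open>0 < D\<close> \<open>0 < D\<close>])
    with \<open>c \<le> C\<close> \<open>C < E\<close> show ?thesis
      by simp
  next
    case (4 b)
    then have "hd s = y" "last s = x"
      using \<open>C < E\<close> by (simp_all add: hd_append last_append)
    with hd_last \<open>x \<noteq> y\<close> show ?thesis
      by simp
  next
    case (5 a)
    then have eq: "replicate E x @ replicate D y @ replicate C x @ replicate B y @ replicate a x
        = replicate a x @ replicate B y @ replicate C x @ replicate D y @ replicate E x"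
      using \<open>rev s = s\<close> by simp
    then have "E = a"
      by (rule leading_runs_eq[OF \<open>x \<noteq> y\<close> \<open>0 < D\<close> \<open>0 < B\<close>])
    with eq have "replicate D y @ replicate C x @ replicate B y @ replicate a x
        = replicate B y @ replicate C x @ replicate D y @ replicate E x"
      by simp
    then have "D = B"
      by (rule leading_runs_eq[OF \<open>x \<noteq> y\<close>[symmetric] \<open>0 < C\<close> \<open>0 < C\<close>])
    with \<open>B \<noteq> D\<close> show ?thesis
      by simp
  qed
qed

lemma not_rich_five_runs_if_last_le_first:
  assumes "x \<noteq> y" "0 < B" "0 < C" "0 < D" "B \<noteq> D" "C < E" "E \<le> A"
  shows "\<not> rich (replicate A x @ replicate B y @ replicate C x @ replicate D y @ replicate E x)"
proof -
  obtain E' where E': "E = Suc E'"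
    using \<open>C < E\<close> less_imp_Suc_add by blast
  define u where "u = replicate A x @ replicate B y @ replicate C x @ replicate D y @ replicate E' x"
  have word: "replicate A x @ replicate B y @ replicate C x @ replicate D y @ replicate E x = u @ [x]"
    by (simp add: u_def E' replicate_append_same)
  have "\<not> rich (u @ [x])"
  proof (rule not_rich_snocI)
    fix s
    assume "suffix s (u @ [x])" "rev s = s"
    then have "suffix s (replicate E x)"
      using palindromic_suffix_of_five_runs[OF assms(1-6), where A = A] unfolding word by blast
    then obtain m where "m \<le> A" "s = replicate m x"
      using \<open>E \<le> A\<close> by (auto simp: suffix_replicate)
    then have "prefix s (replicate A x)"
      by (metis prefix_def le_add_diff_inverse replicate_add)
    then show "sublist s u"
      unfolding u_def by (intro prefix_imp_sublist prefix_prefix)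
  qed
  with word show ?thesis
    by simp
qed

lemma not_rich_five_runs:
  assumes "x \<noteq> y" "0 < B" "0 < C" "0 < D" "B \<noteq> D" "C < A" "C < E"
  shows "\<not> rich (replicate A x @ replicate B y @ replicate C x @ replicate D y @ replicate E x)"
proof (cases "E \<le> A")
  case True
  with assms show ?thesis
    by (intro not_rich_five_runs_if_last_le_first) auto
next
  case False
  with assms have "\<not> rich (rev (replicate A x @ replicate B y @ replicate C x @ replicate D y @ replicate E x))"
    using not_rich_five_runs_if_last_le_first[of x y D C B A E] by simp
  then show ?thesis
    unfolding rich_rev .
qed

fun alternating_runs :: "'a \<Rightarrow> 'a \<Rightarrow> nat list \<Rightarrow> 'a list" where
  "alternating_runs x y [] = []"
| "alternating_runs x y (n # ns) = replicate n x @ alternating_runs y x ns"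

lemma run_length_Cons: "run_length (c # t) = Suc (run_length (dropWhile (\<lambda>a. a = c) t))"
  by (simp add: run_length_def remdups_adj_Cons')

lemma ex_alternating_runs_prefix:
  assumes "x \<noteq> y" "set w \<subseteq> {x, y}" "w \<noteq> [] \<longrightarrow> hd w = x" "k \<le> run_length w"
  shows "\<exists>ns Z. length ns = k \<and> 0 \<notin> set ns \<and> w = alternating_runs x y ns @ Z"
  using assms
proof (induction k arbitrary: x y w)
  case 0
  show ?case
    by (rule exI[of _ "[]"]) simp
next
  case (Suc k)
  then obtain t where w: "w = x # t"
    by (cases w) (auto simp: run_length_def)
  define rest where "rest = dropWhile (\<lambda>a. a = x) t"
  define n where "n = length (takeWhile (\<lambda>a. a = x) t)"
  have "takeWhile (\<lambda>a. a = x) t = replicate n x"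
    unfolding n_def by (rule replicate_length_same[symmetric]) (auto dest: set_takeWhileD)
  then have w_split: "w = replicate (Suc n) x @ rest"
    using takeWhile_dropWhile_id[of "\<lambda>a. a = x" t] by (simp add: w rest_def)
  have rest_letters: "set rest \<subseteq> {y, x}"
    using Suc.prems(2) by (auto simp: w rest_def dest: set_dropWhileD)
  have rest_hd: "rest \<noteq> [] \<longrightarrow> hd rest = y"
  proof
    assume "rest \<noteq> []"
    then have "hd rest \<noteq> x"
      unfolding rest_def by (rule hd_dropWhile)
    moreover have "hd rest \<in> {y, x}"
      using \<open>rest \<noteq> []\<close> rest_letters hd_in_set by blast
    ultimately show "hd rest = y"
      by simp
  qed
  have rest_runs: "k \<le> run_length rest"
    using Suc.prems(4) by (simp add: w rest_def run_length_Cons)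
  obtain ns Z where "length ns = k" "0 \<notin> set ns" "rest = alternating_runs y x ns @ Z"
    using Suc.IH[OF Suc.prems(1)[symmetric] rest_letters rest_hd rest_runs] by blast
  then show ?case
    using w_split by (intro exI[of _ "Suc n # ns"] exI[of _ Z]) simp
qed

lemma concat_filter_neq_Nil: "concat (filter (\<lambda>B. B \<noteq> []) Bs) = concat Bs"
  by (induction Bs) auto

lemma concat_rev_in_block_reversal:
  assumes "concat Bs = w" and "w \<noteq> []"
  shows "concat (rev Bs) \<in> block_reversal w"
proof -
  let ?Bs = "filter (\<lambda>B. B \<noteq> []) Bs"
  have "concat ?Bs = w"
    using assms(1) by (simp add: concat_filter_neq_Nil)
  moreover from this have "?Bs \<noteq> []"
    using assms(2) by force
  ultimately have "concat (rev ?Bs) \<in> block_reversal w"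
    unfolding block_reversal_def by (intro CollectI exI[of _ ?Bs]) simp
  then show ?thesis
    by (simp add: rev_filter concat_filter_neq_Nil)
qed

lemma nine_runs_block_reversal_not_rich:
  assumes "x \<noteq> y" "length ns = 9" "0 \<notin> set ns" "w = alternating_runs x y ns @ Z"
  shows "\<exists>v \<in> block_reversal w. \<not> rich v"
proof -
  obtain n0 n1 n2 n3 n4 n5 n6 n7 n8 where ns: "ns = [n0, n1, n2, n3, n4, n5, n6, n7, n8]"
    using \<open>length ns = 9\<close> by (auto simp: numeral_eq_Suc length_Suc_conv)
  have pos: "0 < n0" "0 < n1" "0 < n2" "0 < n3" "0 < n4" "0 < n5" "0 < n6" "0 < n7" "0 < n8"
    using \<open>0 \<notin> set ns\<close> by (auto simp: ns)
  obtain m4 m7 where m4: "n4 = Suc m4" and m7: "n7 = Suc m7"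
    using pos by (metis gr0_conv_Suc)
  define Bs where "Bs = [replicate n0 x @ replicate n1 y, replicate n2 x, replicate n3 y @ replicate m4 x,
     x # replicate n5 y, replicate n6 x @ [y], replicate m7 y @ replicate n8 x, Z]"
  define u where "u = replicate (n8 + n6) x @ replicate 1 y @ replicate 1 x @ replicate (n5 + n3) y @
     replicate (m4 + n2 + n0) x"
  have "concat Bs = w"
    using assms(4) by (simp add: Bs_def ns m4 m7 replicate_append_same)
  moreover have "w \<noteq> []"
    using assms(4) pos(1) by (simp add: ns)
  ultimately have "concat (rev Bs) \<in> block_reversal w"
    by (rule concat_rev_in_block_reversal)
  moreover have "concat (rev Bs) = (Z @ replicate m7 y) @ u @ replicate n1 y"
    by (simp add: Bs_def u_def replicate_add)
  then have "sublist u (concat (rev Bs))"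
    by (metis sublist_appendI)
  moreover have "\<not> rich u"
    unfolding u_def using \<open>x \<noteq> y\<close> pos by (intro not_rich_five_runs) auto
  ultimately show ?thesis
    using rich_sublist by blast
qed

theorem mainTheorem7:
  fixes a b :: 'a and w :: "'a list"
  assumes "a \<noteq> b"
    and "set w \<subseteq> {a, b}"
    and "run_length w \<ge> 9"
  shows "\<exists>v \<in> block_reversal w. \<not> rich v"
proof -
  define x where "x = hd w"
  define y where "y = (if x = a then b else a)"
  have "w \<noteq> []"
    using assms(3) by (auto simp: run_length_def)
  then have "x \<in> {a, b}"
    using assms(2) hd_in_set unfolding x_def by blast
  with assms(1,2) have "x \<noteq> y" "set w \<subseteq> {x, y}"
    by (auto simp: y_def)
  moreover have "w \<noteq> [] \<longrightarrow> hd w = x"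
    by (simp add: x_def)
  ultimately obtain ns Z where "length ns = 9" "0 \<notin> set ns" "w = alternating_runs x y ns @ Z"
    using ex_alternating_runs_prefix[of x y w 9] assms(3) by blast
  with \<open>x \<noteq> y\<close> show ?thesis
    by (intro nine_runs_block_reversal_not_rich)
qed

end
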